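(* Let $f$ be a scale mixture of normals density with shape parameter $\delta\in\Delta$. Consider the accelerated failure time model $y_j=\log(T_j)={\bf x}_j^\top\bm\beta+\varepsilon_j$, $j=1,\dots,n$, for survival times $T_1,\dots,T_n$, where $\bm\beta\in\mathbb{R}^p$, ${\bf X}=({\bf x}_1^\top,\dots,{\bf x}_n^\top)^\top$ is a known $n\times p$ design matrix of full column rank, and $\varepsilon_j\stackrel{i.i.d.}{\sim}\mathrm{TP}(0,\sigma,\delta,\gamma;f)$, with prior $\pi(\bm\beta,\sigma,\delta,\gamma)\propto\pi(\gamma)\pi(\delta)/\sigma^{q}$, $q\ge0$, $\pi(\gamma),\pi(\delta)$ proper. Suppose that $n_c\le n$ of the survival times are censored and $n_o=n-n_c$ are observed, and let ${\bf y}_o$ denote the uncensored (log) observations and ${\bf X}_o$ the corresponding design submatrix. If the posterior distribution of $(\bm\beta,\sigma,\delta,\gamma)$ based only on the $n_o$ uncensored observations (i.e. on the model for ${\bf y}_o$ with design matrix ${\bf X}_o$ and the same prior) is proper, then the posterior distribution of $(\bm\beta,\sigma,\delta,\gamma)$ based on the full (censored and uncensored) sample is proper.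
   Context: A scale mixture of normals density is $f(z\mid\delta)=\int_{\mathbb{R}_+}\tau^{1/2}\phi(\tau^{1/2}z)\,dH(\tau\mid\delta)$ with $\phi$ the standard normal density and $H(\cdot\mid\delta)$ a mixing distribution on $\mathbb{R}_+$. The two-piece distribution $\mathrm{TP}(\mu,\sigma,\delta,\gamma;f)$ has density $g(z)=\frac{2}{\sigma[a(\gamma)+b(\gamma)]}\left[f\!\left(\frac{z-\mu}{\sigma b(\gamma)}\Big|\delta\right)I(z<\mu)+f\!\left(\frac{z-\mu}{\sigma a(\gamma)}\Big|\delta\right)I(z\ge\mu)\right]$, $z\in\mathbb{R}$, with $\mu\in\mathbb{R}$, $\sigma>0$, $\gamma\in\Gamma\subset\mathbb{R}$, and $a(\cdot),b(\cdot)$ given positive functions on $\Gamma$. In the likelihood, an uncensored observation contributes the density $g(y_j-{\bf x}_j^\top\bm\beta)$ (with $\mu=0$) and a censored observation contributes the probability, under this error distribution, that $y_j$ lies in its censoring set (e.g. $(\log T_j,\infty)$ for right censoring, or an interval for interval censoring). The posterior is proper if likelihood times prior has finite integral. *)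

theory Defs
  imports "HOL-Probability.Probability"
begin

text \<open>Mixing distributions: a kernel from the shape-parameter space (measure space MD,
  carrier = Delta) to probability distributions on the nonnegative reals.\<close>
definition mixing_kernel :: "'d measure \<Rightarrow> ('d \<Rightarrow> real measure) \<Rightarrow> bool" where
  "mixing_kernel MD H \<longleftrightarrow> H \<in> measurable MD (subprob_algebra borel) \<and>
     (\<forall>\<delta>\<in>space MD. prob_space (H \<delta>) \<and> sets (H \<delta>) = sets borel \<and> emeasure (H \<delta>) {..<0} = 0)"

definition smn_density :: "('d \<Rightarrow> real measure) \<Rightarrow> real \<Rightarrow> 'd \<Rightarrow> ennreal" where
  "smn_density H z \<delta> = (\<integral>\<^sup>+\<tau>. ennreal (sqrt \<tau> * std_normal_density (sqrt \<tau> * z)) \<partial>(H \<delta>))"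

definition tp_density :: "(real \<Rightarrow> 'd \<Rightarrow> ennreal) \<Rightarrow> (real \<Rightarrow> real) \<Rightarrow> (real \<Rightarrow> real) \<Rightarrow>
    real \<Rightarrow> real \<Rightarrow> 'd \<Rightarrow> real \<Rightarrow> real \<Rightarrow> ennreal" where
  "tp_density f a b \<mu> \<sigma> \<delta> \<gamma> z =
     ennreal (2 / (\<sigma> * (a \<gamma> + b \<gamma>))) *
     (if z < \<mu> then f ((z - \<mu>) / (\<sigma> * b \<gamma>)) \<delta> else f ((z - \<mu>) / (\<sigma> * a \<gamma>)) \<delta>)"

definition lik_uncens :: "(real \<Rightarrow> 'd \<Rightarrow> ennreal) \<Rightarrow> (real \<Rightarrow> real) \<Rightarrow> (real \<Rightarrow> real) \<Rightarrow>
    real^'p^'n \<Rightarrow> real^'n \<Rightarrow> 'n set \<Rightarrow> real^'p \<Rightarrow> real \<Rightarrow> 'd \<Rightarrow> real \<Rightarrow> ennreal" where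
  "lik_uncens f a b X y Obs \<beta> \<sigma> \<delta> \<gamma> =
     (\<Prod>j\<in>Obs. tp_density f a b 0 \<sigma> \<delta> \<gamma> (y $ j - (X *v \<beta>) $ j))"

text \<open>Full likelihood: uncensored observations contribute the density, censored ones
  (indices not in Obs) the probability that y_j lies in its censoring set C j.\<close>
definition lik_full :: "(real \<Rightarrow> 'd \<Rightarrow> ennreal) \<Rightarrow> (real \<Rightarrow> real) \<Rightarrow> (real \<Rightarrow> real) \<Rightarrow>
    real^'p^'n::finite \<Rightarrow> real^'n \<Rightarrow> 'n set \<Rightarrow> ('n \<Rightarrow> real set) \<Rightarrow>
    real^'p \<Rightarrow> real \<Rightarrow> 'd \<Rightarrow> real \<Rightarrow> ennreal" where
  "lik_full f a b X y Obs C \<beta> \<sigma> \<delta> \<gamma> =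
     lik_uncens f a b X y Obs \<beta> \<sigma> \<delta> \<gamma> *
     (\<Prod>j\<in>UNIV - Obs. \<integral>\<^sup>+z. indicator (C j) z * tp_density f a b 0 \<sigma> \<delta> \<gamma> (z - (X *v \<beta>) $ j) \<partial>lborel)"

definition post_mass :: "'d measure \<Rightarrow> ('d \<Rightarrow> real) \<Rightarrow> real set \<Rightarrow> (real \<Rightarrow> real) \<Rightarrow> real \<Rightarrow>
    (real^'p::finite \<Rightarrow> real \<Rightarrow> 'd \<Rightarrow> real \<Rightarrow> ennreal) \<Rightarrow> ennreal" where
  "post_mass MD pd \<Gamma> pg q L =
     (\<integral>\<^sup>+\<gamma>. indicator \<Gamma> \<gamma> * (\<integral>\<^sup>+\<delta>. (\<integral>\<^sup>+\<sigma>. indicator {0<..} \<sigma> *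
        (\<integral>\<^sup>+\<beta>. L \<beta> \<sigma> \<delta> \<gamma> * ennreal (pg \<gamma> * pd \<delta> / \<sigma> powr q) \<partial>lborel) \<partial>lborel) \<partial>MD) \<partial>lborel)"

definition posterior_proper :: "'d measure \<Rightarrow> ('d \<Rightarrow> real) \<Rightarrow> real set \<Rightarrow> (real \<Rightarrow> real) \<Rightarrow> real \<Rightarrow>
    (real^'p::finite \<Rightarrow> real \<Rightarrow> 'd \<Rightarrow> real \<Rightarrow> ennreal) \<Rightarrow> bool" where
  "posterior_proper MD pd \<Gamma> pg q L \<longleftrightarrow> post_mass MD pd \<Gamma> pg q L < \<infinity>"

end

theory Submission
  imports Defs
begin

text \<open>Each censored observation contributes the mass that the two-piece density gives to its
  censoring set.  The two pieces are rescalings of the mixture density \<open>f\<close>, whose integral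
  is at most 1, by \<open>\<sigma> b(\<gamma>)\<close> and \<open>\<sigma> a(\<gamma>)\<close>; together with the normalising factor
  \<open>2 / (\<sigma> (a(\<gamma>) + b(\<gamma>)))\<close> this bounds every censored factor by 2, uniformly in the parameters.  Hence the full likelihood
  is at most \<open>2^n\<^sub>c\<close> times the likelihood of the uncensored observations, pointwise, and
  integrating against the prior transfers the finiteness of the posterior mass.\<close>

lemma nn_integral_cmult_ge:
  fixes c :: ennreal
  shows "c * integral\<^sup>N M f \<le> (\<integral>\<^sup>+x. c * f x \<partial>M)"
proof -
  have "c * integral\<^sup>N M f = (SUP g\<in>{g. simple_function M g \<and> g \<le> f}. c * integral\<^sup>S M g)"
    unfolding nn_integral_def by (simp add: SUP_mult_left_ennreal)
  also have "\<dots> \<le> (\<integral>\<^sup>+x. c * f x \<partial>M)"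
  proof (rule SUP_least)
    fix g assume g: "g \<in> {g. simple_function M g \<and> g \<le> f}"
    have sg: "simple_function M (\<lambda>x. c * g x)"
      using g by (auto intro: simple_function_compose1[where g="\<lambda>y. c * y"])
    have "(\<integral>\<^sup>Sx. c * g x \<partial>M) \<le> (\<integral>\<^sup>+x. c * f x \<partial>M)"
      unfolding nn_integral_def
      by (rule SUP_upper) (use g sg in \<open>auto simp: le_fun_def intro: mult_left_mono\<close>)
    then show "c * integral\<^sup>S M g \<le> (\<integral>\<^sup>+x. c * f x \<partial>M)" using g by simp
  qed
  finally show ?thesis .
qed

text \<open>Unlike \<open>nn_integral_cmult\<close>, no measurability of \<open>f\<close> is needed for a finite constant;
  this matters for the nested posterior integrals, whose integrands are not known to be
  measurable.\<close>

lemma nn_integral_cmult_finite: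
  fixes c :: ennreal
  assumes "c \<noteq> \<infinity>"
  shows "(\<integral>\<^sup>+x. c * f x \<partial>M) = c * integral\<^sup>N M f"
proof (cases "c = 0")
  case False
  have inv: "inverse c * c = 1"
    using ennreal_divide_self[of c] assms False
    by (auto simp: divide_ennreal_def mult.commute top.not_eq_extremum)
  have "inverse c * (\<integral>\<^sup>+x. c * f x \<partial>M) \<le> (\<integral>\<^sup>+x. inverse c * (c * f x) \<partial>M)"
    by (rule nn_integral_cmult_ge)
  also have "\<dots> = integral\<^sup>N M f"
    by (simp add: mult.assoc[symmetric] inv)
  finally have "c * (inverse c * (\<integral>\<^sup>+x. c * f x \<partial>M)) \<le> c * integral\<^sup>N M f"
    by (rule mult_left_mono) simp
  then have "(\<integral>\<^sup>+x. c * f x \<partial>M) \<le> c * integral\<^sup>N M f"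
    by (simp add: mult.assoc[symmetric] mult.commute[of c] inv)
  then show ?thesis using nn_integral_cmult_ge[of c M f] by (rule antisym)
qed simp

lemma nn_integral_lborel_rescale:
  fixes F :: "real \<Rightarrow> ennreal"
  assumes [measurable]: "F \<in> borel_measurable borel" and "s > 0"
  shows "(\<integral>\<^sup>+z. F (z / s) \<partial>lborel) = ennreal s * integral\<^sup>N lborel F"
proof -
  have "(\<integral>\<^sup>+z. F (z / s) \<partial>lborel) = \<bar>s\<bar> * (\<integral>\<^sup>+x. F ((0 + s * x) / s) \<partial>lborel)"
    by (rule nn_integral_real_affine) (use \<open>s > 0\<close> in auto)
  then show ?thesis using \<open>s > 0\<close> by simp
qed

lemma nn_integral_scaled_std_normal_le_1:
  "(\<integral>\<^sup>+z. ennreal (sqrt \<tau> * std_normal_density (sqrt \<tau> * z)) \<partial>lborel) \<le> 1"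
proof (cases "\<tau> > 0")
  case False
  then have "ennreal (sqrt \<tau> * std_normal_density (sqrt \<tau> * z)) = 0" for z
    by (simp add: ennreal_eq_0_iff mult_nonpos_nonneg)
  then show ?thesis by simp
next
  case True
  have "(\<integral>\<^sup>+x. ennreal (std_normal_density x) \<partial>lborel)
      = \<bar>sqrt \<tau>\<bar> * (\<integral>\<^sup>+z. ennreal (std_normal_density (0 + sqrt \<tau> * z)) \<partial>lborel)"
    by (rule nn_integral_real_affine) (use True in auto)
  also have "\<dots> = (\<integral>\<^sup>+z. ennreal (sqrt \<tau> * std_normal_density (sqrt \<tau> * z)) \<partial>lborel)"
    using True by (simp add: ennreal_mult nn_integral_cmult_finite[symmetric])
  finally show ?thesis
    using integrable_normal_moment[of 0 1 0] by (subst (asm) nn_integral_eq_integral) auto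
qed

lemma smn_kernel_measurable:
  assumes "sets N = sets borel"
  shows "(\<lambda>(z, \<tau>). ennreal (sqrt \<tau> * std_normal_density (sqrt \<tau> * z))) \<in> borel_measurable (lborel \<Otimes>\<^sub>M N)"
proof -
  have "sets (lborel \<Otimes>\<^sub>M N) = sets (borel \<Otimes>\<^sub>M borel)"
    by (rule sets_pair_measure_cong) (auto simp: assms)
  moreover have "(\<lambda>(z, \<tau>). ennreal (sqrt \<tau> * std_normal_density (sqrt \<tau> * z)))
      \<in> borel_measurable (borel \<Otimes>\<^sub>M (borel :: real measure))"
    by measurable
  ultimately show ?thesis using measurable_cong_sets by blast
qed

lemma
  assumes "prob_space (H \<delta>)" and "sets (H \<delta>) = sets borel"
  shows smn_density_measurable: "(\<lambda>z. smn_density H z \<delta>) \<in> borel_measurable borel"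
    and nn_integral_smn_density_le_1: "(\<integral>\<^sup>+z. smn_density H z \<delta> \<partial>lborel) \<le> 1"
proof -
  interpret prob_space "H \<delta>" by fact
  note kernel = smn_kernel_measurable[OF assms(2)]
  have "(\<lambda>z. smn_density H z \<delta>) \<in> borel_measurable lborel"
    unfolding smn_density_def by (rule borel_measurable_nn_integral[OF kernel])
  then show "(\<lambda>z. smn_density H z \<delta>) \<in> borel_measurable borel" by simp
  interpret pair_sigma_finite lborel "H \<delta>"
    by (intro pair_sigma_finite.intro sigma_finite_measure_axioms lborel.sigma_finite_measure_axioms)
  have "(\<integral>\<^sup>+z. smn_density H z \<delta> \<partial>lborel)
      = (\<integral>\<^sup>+\<tau>. (\<integral>\<^sup>+z. ennreal (sqrt \<tau> * std_normal_density (sqrt \<tau> * z)) \<partial>lborel) \<partial>H \<delta>)"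
    unfolding smn_density_def by (rule Fubini'[OF kernel, symmetric])
  also have "\<dots> \<le> (\<integral>\<^sup>+\<tau>. 1 \<partial>H \<delta>)"
    by (rule nn_integral_mono) (rule nn_integral_scaled_std_normal_le_1)
  finally show "(\<integral>\<^sup>+z. smn_density H z \<delta> \<partial>lborel) \<le> 1"
    by (simp add: emeasure_space_1)
qed

lemma nn_integral_tp_density_le_2:
  assumes [measurable]: "(\<lambda>z. f z \<delta>) \<in> borel_measurable borel"
    and f_le_1: "(\<integral>\<^sup>+z. f z \<delta> \<partial>lborel) \<le> 1"
    and "\<sigma> > 0" "a \<gamma> > 0" "b \<gamma> > 0"
  shows "(\<integral>\<^sup>+z. tp_density f a b 0 \<sigma> \<delta> \<gamma> z \<partial>lborel) \<le> 2"
proof -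
  define sa sb where "sa = \<sigma> * a \<gamma>" and "sb = \<sigma> * b \<gamma>"
  define K where "K = ennreal (2 / (\<sigma> * (a \<gamma> + b \<gamma>)))"
  have pos: "sa > 0" "sb > 0" using assms by (simp_all add: sa_def sb_def)
  have "tp_density f a b 0 \<sigma> \<delta> \<gamma> z = K * (if z < 0 then f (z / sb) \<delta> else f (z / sa) \<delta>)" for z
    unfolding tp_density_def K_def sa_def sb_def by simp
  then have "tp_density f a b 0 \<sigma> \<delta> \<gamma> z \<le> K * f (z / sb) \<delta> + K * f (z / sa) \<delta>" for z
    by (cases "z < 0") (simp_all add: add_increasing add_increasing2)
  then have "(\<integral>\<^sup>+z. tp_density f a b 0 \<sigma> \<delta> \<gamma> z \<partial>lborel)
      \<le> (\<integral>\<^sup>+z. K * f (z / sb) \<delta> + K * f (z / sa) \<delta> \<partial>lborel)"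
    by (rule nn_integral_mono)
  also have "\<dots> = K * ennreal sb * (\<integral>\<^sup>+z. f z \<delta> \<partial>lborel) + K * ennreal sa * (\<integral>\<^sup>+z. f z \<delta> \<partial>lborel)"
    using pos nn_integral_lborel_rescale[of "\<lambda>z. f z \<delta>"]
    by (simp add: nn_integral_add nn_integral_cmult mult.assoc)
  also have "\<dots> \<le> K * ennreal sb + K * ennreal sa"
    using mult_left_mono[OF f_le_1, of "K * ennreal _"] by (intro add_mono) simp_all
  also have "\<dots> = K * ennreal (sb + sa)"
    using pos by (simp add: distrib_left)
  also have "\<dots> = ennreal (2 / (\<sigma> * (a \<gamma> + b \<gamma>)) * (sb + sa))"
    unfolding K_def by (rule ennreal_mult[symmetric]) (use assms pos in auto)
  also have "2 / (\<sigma> * (a \<gamma> + b \<gamma>)) * (sb + sa) = 2"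
    using assms by (simp add: sa_def sb_def distrib_left[symmetric] add.commute)
  finally show ?thesis by simp
qed

lemma censored_factor_le_2:
  assumes "(\<lambda>z. f z \<delta>) \<in> borel_measurable borel" "(\<integral>\<^sup>+z. f z \<delta> \<partial>lborel) \<le> 1"
    and "\<sigma> > 0" "a \<gamma> > 0" "b \<gamma> > 0"
  shows "(\<integral>\<^sup>+z. indicator D z * tp_density f a b 0 \<sigma> \<delta> \<gamma> (z - m) \<partial>lborel) \<le> 2"
proof -
  have [measurable]: "tp_density f a b 0 \<sigma> \<delta> \<gamma> \<in> borel_measurable borel"
    using assms(1) unfolding tp_density_def by measurable
  have "(\<integral>\<^sup>+z. indicator D z * tp_density f a b 0 \<sigma> \<delta> \<gamma> (z - m) \<partial>lborel)
      \<le> (\<integral>\<^sup>+z. tp_density f a b 0 \<sigma> \<delta> \<gamma> (- m + 1 * z) \<partial>lborel)"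
    by (rule nn_integral_mono) (auto split: split_indicator)
  also have "\<dots> = (\<integral>\<^sup>+z. tp_density f a b 0 \<sigma> \<delta> \<gamma> z \<partial>lborel)"
    using nn_integral_real_affine[of "tp_density f a b 0 \<sigma> \<delta> \<gamma>" 1 "- m"] by simp
  also have "\<dots> \<le> 2"
    using assms by (rule nn_integral_tp_density_le_2)
  finally show ?thesis .
qed

lemma lik_full_le_lik_uncens:
  assumes "(\<lambda>z. f z \<delta>) \<in> borel_measurable borel" "(\<integral>\<^sup>+z. f z \<delta> \<partial>lborel) \<le> 1"
    and "\<sigma> > 0" "a \<gamma> > 0" "b \<gamma> > 0"
  shows "lik_full f a b X y Obs C \<beta> \<sigma> \<delta> \<gamma> \<le> 2 ^ card (UNIV - Obs) * lik_uncens f a b X y Obs \<beta> \<sigma> \<delta> \<gamma>"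
proof -
  have "(\<Prod>j\<in>UNIV - Obs. \<integral>\<^sup>+z. indicator (C j) z * tp_density f a b 0 \<sigma> \<delta> \<gamma> (z - (X *v \<beta>) $ j) \<partial>lborel)
      \<le> (\<Prod>j\<in>UNIV - Obs. 2)"
    by (rule prod_mono_ennreal) (rule censored_factor_le_2[of f \<delta> \<sigma> a \<gamma> b, OF assms])
  also have "\<dots> = 2 ^ card (UNIV - Obs)"
    by simp
  finally have "(\<Prod>j\<in>UNIV - Obs. \<integral>\<^sup>+z. indicator (C j) z * tp_density f a b 0 \<sigma> \<delta> \<gamma> (z - (X *v \<beta>) $ j) \<partial>lborel)
      \<le> 2 ^ card (UNIV - Obs)" .
  then show ?thesis
    unfolding lik_full_def by (subst mult.commute) (rule mult_right_mono[OF _ zero_le])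
qed

lemma nn_integral_indicator_mono:
  assumes "\<And>x. x \<in> A \<Longrightarrow> f x \<le> g x"
  shows "(\<integral>\<^sup>+x. indicator A x * f x \<partial>M) \<le> (\<integral>\<^sup>+x. indicator A x * g x \<partial>M)"
  by (rule nn_integral_mono) (auto split: split_indicator intro: assms)

lemma post_mass_mono:
  assumes "\<And>\<beta> \<sigma> \<delta> \<gamma>. \<gamma> \<in> \<Gamma> \<Longrightarrow> \<sigma> > 0 \<Longrightarrow> \<delta> \<in> space MD \<Longrightarrow> L \<beta> \<sigma> \<delta> \<gamma> \<le> L' \<beta> \<sigma> \<delta> \<gamma>"
  shows "post_mass MD pd \<Gamma> pg q L \<le> post_mass MD pd \<Gamma> pg q L'"
  unfolding post_mass_def
  by (intro nn_integral_indicator_mono nn_integral_mono mult_right_mono) (auto intro: assms)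

lemma post_mass_cmult:
  assumes "c \<noteq> \<infinity>"
  shows "post_mass MD pd \<Gamma> pg q (\<lambda>\<beta> \<sigma> \<delta> \<gamma>. c * L \<beta> \<sigma> \<delta> \<gamma>) = c * post_mass MD pd \<Gamma> pg q L"
  unfolding post_mass_def
  by (simp add: nn_integral_cmult_finite[OF assms] mult.assoc mult.left_commute[of _ c])

theorem theorem4p1:
  fixes MD :: "'d measure" and H :: "'d \<Rightarrow> real measure"
    and a b :: "real \<Rightarrow> real" and \<Gamma> :: "real set"
    and X :: "real^'p::finite^'n::finite" and y :: "real^'n"
    and Obs :: "'n set" and C :: "'n \<Rightarrow> real set"
    and q :: real and pg :: "real \<Rightarrow> real" and pd :: "'d \<Rightarrow> real"
  assumes H: "mixing_kernel MD H"
    and ab_pos: "\<forall>\<gamma>\<in>\<Gamma>. a \<gamma> > 0 \<and> b \<gamma> > 0"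
    and Gamma_meas: "\<Gamma> \<in> sets borel"
    and rankX: "rank X = CARD('p)"
    and C_meas: "\<forall>j. j \<notin> Obs \<longrightarrow> C j \<in> sets borel"
    and q: "q \<ge> 0"
    and pg_meas: "pg \<in> borel_measurable borel" and pg_nonneg: "\<forall>\<gamma>. pg \<gamma> \<ge> 0"
    and pg_proper: "(\<integral>\<^sup>+\<gamma>. indicator \<Gamma> \<gamma> * ennreal (pg \<gamma>) \<partial>lborel) = 1"
    and pd_meas: "pd \<in> borel_measurable MD" and pd_nonneg: "\<forall>\<delta>\<in>space MD. pd \<delta> \<ge> 0"
    and pd_proper: "(\<integral>\<^sup>+\<delta>. ennreal (pd \<delta>) \<partial>MD) = 1"
    and unc: "posterior_proper MD pd \<Gamma> pg q (lik_uncens (smn_density H) a b X y Obs)"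
  shows "posterior_proper MD pd \<Gamma> pg q (lik_full (smn_density H) a b X y Obs C)"
proof -
  define c :: ennreal where "c = 2 ^ card (UNIV - Obs)"
  have c_finite: "c \<noteq> \<infinity>"
    by (simp add: c_def power_eq_top_ennreal)
  have "lik_full (smn_density H) a b X y Obs C \<beta> \<sigma> \<delta> \<gamma>
      \<le> c * lik_uncens (smn_density H) a b X y Obs \<beta> \<sigma> \<delta> \<gamma>"
    if "\<gamma> \<in> \<Gamma>" "\<sigma> > 0" "\<delta> \<in> space MD" for \<beta> \<sigma> \<delta> \<gamma>
  proof -
    have "prob_space (H \<delta>)" "sets (H \<delta>) = sets borel"
      using H \<open>\<delta> \<in> space MD\<close> by (auto simp: mixing_kernel_def)
    then show ?thesis unfolding c_def
      using ab_pos that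
      by (intro lik_full_le_lik_uncens smn_density_measurable nn_integral_smn_density_le_1) auto
  qed
  then have "post_mass MD pd \<Gamma> pg q (lik_full (smn_density H) a b X y Obs C)
      \<le> c * post_mass MD pd \<Gamma> pg q (lik_uncens (smn_density H) a b X y Obs)"
    unfolding post_mass_cmult[OF c_finite, symmetric] by (rule post_mass_mono)
  also have "\<dots> < \<infinity>"
    using unc c_finite unfolding posterior_proper_def
    by (simp add: ennreal_mult_less_top top.not_eq_extremum)
  finally show ?thesis
    unfolding posterior_proper_def .
qed

end
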